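(* Let $P,K:\mathbb{N}_0\to\mathbb{N}_0$ be a scaling with $\lim_{n\to\infty}K_n^2/P_n=0$, and let $p:\mathbb{N}_0\to[0,1]$ satisfy $p_n\sim 1-q(\theta_n)$. Then $$\frac{\mathbb{E}[T_n(\theta_n)]}{\mathbb{E}[T_n(p_n)]}\sim 1+\frac{P_n}{K_n^3}.$$
   Context: Random key graph: for positive integers $K\le P$, $\theta=(K,P)$ and $n\ge3$, each of $n$ nodes receives independently a uniformly random $K$-element subset of $\{1,\dots,P\}$; distinct nodes are adjacent iff their subsets intersect; $T_n(\theta)$ is the number of triangles in this graph. $q(\theta)=\binom{P-K}{K}/\binom{P}{K}$ if $2K\le P$ and $0$ otherwise. $T_n(p)$ is the number of triangles in the Erdős–Rényi graph $\mathbb{G}(n;p)$ (each edge present independently with probability $p$), so $\mathbb{E}[T_n(p)]=\binom n3 p^3$. A scaling is a pair $P,K:\mathbb{N}_0\to\mathbb{N}_0$ with $1\le K_n\le P_n$, and $\theta_n=(K_n,P_n)$; $a_n\sim b_n$ means $a_n/b_n\to1$. *)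

theory Defs
  imports "HOL-Probability.Probability"
begin

definition key_rings :: "nat \<Rightarrow> nat \<Rightarrow> nat set set" where
  "key_rings K P = {S. S \<subseteq> {1..P} \<and> card S = K}"

definition key_assignment :: "nat \<Rightarrow> nat \<Rightarrow> nat \<Rightarrow> (nat \<Rightarrow> nat set) pmf" where
  "key_assignment n K P = Pi_pmf {..<n} {} (\<lambda>_. pmf_of_set (key_rings K P))"

definition triangles :: "nat \<Rightarrow> (nat \<Rightarrow> nat \<Rightarrow> bool) \<Rightarrow> nat" where
  "triangles n adj = card {T. T \<subseteq> {..<n} \<and> card T = 3 \<and>
       (\<forall>i\<in>T. \<forall>j\<in>T. i \<noteq> j \<longrightarrow> adj i j)}"

definition rkg_adj :: "(nat \<Rightarrow> nat set) \<Rightarrow> nat \<Rightarrow> nat \<Rightarrow> bool" where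
  "rkg_adj S i j \<longleftrightarrow> i \<noteq> j \<and> S i \<inter> S j \<noteq> {}"

text \<open>E[T_n(theta)] with theta = (K,P).\<close>
definition ET_rkg :: "nat \<Rightarrow> nat \<Rightarrow> nat \<Rightarrow> real" where
  "ET_rkg n K P = measure_pmf.expectation (key_assignment n K P)
                    (\<lambda>S. real (triangles n (rkg_adj S)))"

definition er_edges :: "nat \<Rightarrow> real \<Rightarrow> (nat \<times> nat \<Rightarrow> bool) pmf" where
  "er_edges n p = Pi_pmf {(i,j). i < j \<and> j < n} False (\<lambda>_. bernoulli_pmf p)"

definition er_adj :: "(nat \<times> nat \<Rightarrow> bool) \<Rightarrow> nat \<Rightarrow> nat \<Rightarrow> bool" where
  "er_adj e i j \<longleftrightarrow> i \<noteq> j \<and> e (min i j, max i j)"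

definition ET_er :: "nat \<Rightarrow> real \<Rightarrow> real" where
  "ET_er n p = measure_pmf.expectation (er_edges n p)
                    (\<lambda>e. real (triangles n (er_adj e)))"

text \<open>q(theta): probability that two key rings are disjoint.\<close>
definition q :: "nat \<Rightarrow> nat \<Rightarrow> real" where
  "q K P = (if 2 * K \<le> P then real ((P - K) choose K) / real (P choose K) else 0)"

end

theory Submission
  imports Defs
begin

text \<open>
  Both expectations equal \<open>n choose 3\<close> times the probability that a fixed triple of nodes
  forms a triangle: \<open>p^3\<close> in \<open>G(n;p)\<close>, and for the key graph the probability \<open>\<tau>\<close> that three
  independent uniform \<open>K\<close>-subsets \<open>A, B, C\<close> of \<open>{1..P}\<close> meet pairwise.
  At most \<open>(P choose K) (K/P)^s\<close> key rings contain a prescribed set of \<open>s\<close> keys, so a union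
  bound over witnesses \<open>x \<in> A \<inter> B\<close>, \<open>y \<in> B \<inter> C\<close>, \<open>z \<in> A \<inter> C\<close> gives
  \<open>\<tau> \<le> K^3/P^2 + K^6/P^3 + 3K^5/P^3\<close>.
  Conversely, triples with \<open>A \<inter> B \<inter> C\<close> a single key and triples whose three pairwise
  intersections are distinct single keys are disjoint kinds of meeting triples, and first-order
  inclusion-exclusion shows that they contribute \<open>K^3/P^2\<close> and \<open>K^6/P^3\<close> up to a factor
  \<open>1 + O(1/P + K/P + K^2/P)\<close>. Bernoulli's inequality gives \<open>1 - q \<sim> K^2/P\<close>, hence
  \<open>p^3 \<sim> K^6/P^3\<close>, and the ratio of expectations is
  \<open>\<tau>/p^3 \<sim> (K^3/P^2 + K^6/P^3)/(K^6/P^3) = 1 + P/K^3\<close>.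
\<close>

section \<open>Expected triangle counts\<close>

definition triples :: "nat \<Rightarrow> nat set set" where
  "triples n = {T. T \<subseteq> {..<n} \<and> card T = 3}"

definition clique :: "(nat \<Rightarrow> nat \<Rightarrow> bool) \<Rightarrow> nat set \<Rightarrow> bool" where
  "clique adj T \<longleftrightarrow> (\<forall>i\<in>T. \<forall>j\<in>T. i \<noteq> j \<longrightarrow> adj i j)"

lemma finite_triples: "finite (triples n)"
  unfolding triples_def by (rule finite_subset[of _ "Pow {..<n}"]) auto

lemma card_triples: "card (triples n) = n choose 3"
  unfolding triples_def using n_subsets[of "{..<n}" 3] by simp

lemma expectation_triangles:
  "measure_pmf.expectation M (\<lambda>S. real (triangles n (adj S))) =
     (\<Sum>T\<in>triples n. measure_pmf.prob M {S. clique (adj S) T})"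
proof -
  have "real (triangles n (adj S)) = (\<Sum>T\<in>triples n. indicator {S. clique (adj S) T} S)" for S
  proof -
    have "triangles n (adj S) = card (triples n \<inter> {T. clique (adj S) T})"
      unfolding triangles_def triples_def clique_def by (rule arg_cong[where f = card]) auto
    then show ?thesis by (simp add: indicator_def finite_triples)
  qed
  then have "measure_pmf.expectation M (\<lambda>S. real (triangles n (adj S))) =
      (\<Sum>T\<in>triples n. measure_pmf.expectation M (indicator {S. clique (adj S) T}))"
    by (simp add: Bochner_Integration.integral_sum measure_pmf.integrable_const_bound[where B = 1])
  then show ?thesis by simp
qed

definition ordered_pairs :: "nat set \<Rightarrow> (nat \<times> nat) set" where
  "ordered_pairs T = {(i, j). i \<in> T \<and> j \<in> T \<and> i < j}"

lemma card_ordered_pairs: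
  assumes "card T = 3"
  shows "card (ordered_pairs T) = 3"
proof -
  obtain x y z where T: "T = {x, y, z}" "x \<noteq> y" "y \<noteq> z" "x \<noteq> z"
    using assms unfolding card_3_iff by blast
  have "ordered_pairs T = {(min x y, max x y), (min x z, max x z), (min y z, max y z)}"
    unfolding ordered_pairs_def T(1) using T(2-4) by (auto simp: min_def max_def)
  also have "card \<dots> = 3" using T(2-4) by (auto simp: min_def max_def card_insert_if)
  finally show ?thesis .
qed

lemma prob_clique_er:
  assumes T: "T \<in> triples n" and p: "0 \<le> p" "p \<le> 1"
  shows "measure_pmf.prob (er_edges n p) {e. clique (er_adj e) T} = p ^ 3"
proof -
  define I where "I = {(i, j). i < j \<and> j < n}"
  have "finite I" unfolding I_def by (rule finite_subset[of _ "{..<n} \<times> {..<n}"]) auto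
  have sub: "ordered_pairs T \<subseteq> I" using T unfolding triples_def ordered_pairs_def I_def by auto
  have "{e. clique (er_adj e) T} = Pi I (\<lambda>x. if x \<in> ordered_pairs T then {True} else UNIV)"
    using sub unfolding clique_def er_adj_def ordered_pairs_def
    by (auto simp: Pi_def min_def max_def split: if_splits)
  then have "measure_pmf.prob (er_edges n p) {e. clique (er_adj e) T} =
      (\<Prod>x\<in>I. measure_pmf.prob (bernoulli_pmf p) (if x \<in> ordered_pairs T then {True} else UNIV))"
    unfolding er_edges_def I_def[symmetric] using \<open>finite I\<close> by (simp add: measure_Pi_pmf_Pi)
  also have "\<dots> = (\<Prod>x\<in>I. if x \<in> ordered_pairs T then p else 1)"
    using p by (intro prod.cong) (auto simp: measure_pmf_single)
  also have "\<dots> = p ^ card (ordered_pairs T)"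
    using sub \<open>finite I\<close> by (simp add: prod.If_cases Int_absorb1)
  finally show ?thesis using T card_ordered_pairs unfolding triples_def by simp
qed

lemma ET_er_eq:
  assumes "0 \<le> p" "p \<le> 1"
  shows "ET_er n p = real (n choose 3) * p ^ 3"
  unfolding ET_er_def expectation_triangles using prob_clique_er[OF _ assms] by (simp add: card_triples)

definition meeting_triples :: "nat \<Rightarrow> nat \<Rightarrow> (nat set \<times> nat set \<times> nat set) set" where
  "meeting_triples K P = {(A, B, C). A \<in> key_rings K P \<and> B \<in> key_rings K P \<and> C \<in> key_rings K P \<and>
      A \<inter> B \<noteq> {} \<and> B \<inter> C \<noteq> {} \<and> A \<inter> C \<noteq> {}}"

definition meet_prob :: "nat \<Rightarrow> nat \<Rightarrow> real" where
  "meet_prob K P = real (card (meeting_triples K P)) / real (card (key_rings K P)) ^ 3"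

lemma finite_key_rings: "finite (key_rings K P)"
  unfolding key_rings_def by (rule finite_subset[of _ "Pow {1..P}"]) auto

lemma card_key_rings: "card (key_rings K P) = P choose K"
  unfolding key_rings_def using n_subsets[of "{1..P}" K] by simp

lemma key_rings_nonempty:
  assumes "K \<le> P"
  shows "key_rings K P \<noteq> {}"
proof -
  have "{1..K} \<in> key_rings K P" using assms unfolding key_rings_def by auto
  then show ?thesis by blast
qed

lemma bij_betw_PiE_dflt_triple:
  assumes "x \<noteq> y" "y \<noteq> z" "x \<noteq> z"
  shows "bij_betw (\<lambda>f. (f x, f y, f z)) (PiE_dflt {x, y, z} d (\<lambda>_. R)) (R \<times> R \<times> R)"
proof (rule bij_betwI')
  fix f g assume fg: "f \<in> PiE_dflt {x, y, z} d (\<lambda>_. R)" "g \<in> PiE_dflt {x, y, z} d (\<lambda>_. R)"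
  show "((f x, f y, f z) = (g x, g y, g z)) = (f = g)"
  proof (rule iffI)
    assume "(f x, f y, f z) = (g x, g y, g z)"
    then show "f = g"
    proof (intro ext)
      fix w show "f w = g w"
        using fg \<open>(f x, f y, f z) = (g x, g y, g z)\<close> unfolding PiE_dflt_def
        by (cases "w \<in> {x, y, z}") auto
    qed
  qed simp
next
  fix t assume "t \<in> R \<times> R \<times> R"
  then obtain A B C where "t = (A, B, C)" "A \<in> R" "B \<in> R" "C \<in> R" by auto
  then show "\<exists>f \<in> PiE_dflt {x, y, z} d (\<lambda>_. R). t = (f x, f y, f z)"
    using assms by (intro bexI[of _ "(\<lambda>_. d)(x := A, y := B, z := C)"]) (auto simp: PiE_dflt_def)
qed (auto simp: PiE_dflt_def)

lemma map_key_assignment_triple: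
  assumes "{x, y, z} \<subseteq> {..<n}" "x \<noteq> y" "y \<noteq> z" "x \<noteq> z" "K \<le> P"
  shows "map_pmf (\<lambda>S. (S x, S y, S z)) (key_assignment n K P) =
           pmf_of_set (key_rings K P \<times> key_rings K P \<times> key_rings K P)"
proof -
  let ?T = "{x, y, z}" and ?R = "key_rings K P"
  have "map_pmf (\<lambda>S. (S x, S y, S z)) (key_assignment n K P) =
        map_pmf (\<lambda>S. (S x, S y, S z)) (Pi_pmf ?T {} (\<lambda>_. pmf_of_set ?R))"
    unfolding key_assignment_def using assms(1)
    by (subst Pi_pmf_subset[of "{..<n}" ?T]) (auto simp: map_pmf_comp)
  also have "Pi_pmf ?T {} (\<lambda>_. pmf_of_set ?R) = pmf_of_set (PiE_dflt ?T {} (\<lambda>_. ?R))"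
    using finite_key_rings key_rings_nonempty[OF assms(5)] by (intro Pi_pmf_of_set) auto
  also have "map_pmf (\<lambda>S. (S x, S y, S z)) \<dots> = pmf_of_set (?R \<times> ?R \<times> ?R)"
  proof (rule map_pmf_of_set_bij_betw[OF bij_betw_PiE_dflt_triple[OF assms(2-4)]])
    obtain A where "A \<in> ?R" using key_rings_nonempty[OF assms(5)] by blast
    then have "(\<lambda>_. {})(x := A, y := A, z := A) \<in> PiE_dflt ?T {} (\<lambda>_. ?R)"
      by (auto simp: PiE_dflt_def)
    then show "PiE_dflt ?T {} (\<lambda>_. ?R) \<noteq> {}" by blast
    show "finite (PiE_dflt ?T {} (\<lambda>_. ?R))" using finite_key_rings by blast
  qed
  finally show ?thesis .
qed

lemma prob_clique_rkg:
  assumes T: "T \<in> triples n" and "K \<le> P"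
  shows "measure_pmf.prob (key_assignment n K P) {S. clique (rkg_adj S) T} = meet_prob K P"
proof -
  let ?R = "key_rings K P"
  obtain x y z where xyz: "T = {x, y, z}" "x \<noteq> y" "y \<noteq> z" "x \<noteq> z"
    using T unfolding triples_def card_3_iff by blast
  have "{S. clique (rkg_adj S) T} =
      (\<lambda>S. (S x, S y, S z)) -` {(A, B, C). A \<inter> B \<noteq> {} \<and> B \<inter> C \<noteq> {} \<and> A \<inter> C \<noteq> {}}"
    using xyz unfolding clique_def rkg_adj_def by (auto simp: Int_commute)
  then have "measure_pmf.prob (key_assignment n K P) {S. clique (rkg_adj S) T} =
      measure_pmf.prob (pmf_of_set (?R \<times> ?R \<times> ?R))
        {(A, B, C). A \<inter> B \<noteq> {} \<and> B \<inter> C \<noteq> {} \<and> A \<inter> C \<noteq> {}}"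
    using T xyz assms(2) unfolding triples_def
    by (simp flip: map_key_assignment_triple)
  also have "\<dots> = meet_prob K P"
  proof -
    have "(?R \<times> ?R \<times> ?R) \<inter> {(A, B, C). A \<inter> B \<noteq> {} \<and> B \<inter> C \<noteq> {} \<and> A \<inter> C \<noteq> {}} =
        meeting_triples K P"
      unfolding meeting_triples_def by auto
    then show ?thesis
      using finite_key_rings key_rings_nonempty[OF assms(2)]
      by (simp add: measure_pmf_of_set meet_prob_def card_cartesian_product power3_eq_cube)
  qed
  finally show ?thesis .
qed

lemma ET_rkg_eq: "K \<le> P \<Longrightarrow> ET_rkg n K P = real (n choose 3) * meet_prob K P"
  unfolding ET_rkg_def expectation_triangles using prob_clique_rkg by (simp add: card_triples)

section \<open>Key rings containing prescribed keys\<close>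

definition rings_containing :: "nat \<Rightarrow> nat \<Rightarrow> nat set \<Rightarrow> nat" where
  "rings_containing K P S = card {A \<in> key_rings K P. S \<subseteq> A}"

lemma rings_containing_eq:
  assumes S: "S \<subseteq> {1..P}" and "card S \<le> K"
  shows "rings_containing K P S = (P - card S) choose (K - card S)"
proof -
  have "finite S" using S finite_subset by blast
  have "bij_betw (\<lambda>A. A - S) {A \<in> key_rings K P. S \<subseteq> A}
          {B. B \<subseteq> {1..P} - S \<and> card B = K - card S}"
  proof (rule bij_betw_imageI)
    show "inj_on (\<lambda>A. A - S) {A \<in> key_rings K P. S \<subseteq> A}"
      by (rule inj_onI) blast
    show "(\<lambda>A. A - S) ` {A \<in> key_rings K P. S \<subseteq> A} = {B. B \<subseteq> {1..P} - S \<and> card B = K - card S}"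
    proof
      show "(\<lambda>A. A - S) ` {A \<in> key_rings K P. S \<subseteq> A} \<subseteq> {B. B \<subseteq> {1..P} - S \<and> card B = K - card S}"
        unfolding key_rings_def using \<open>finite S\<close> by (auto simp: card_Diff_subset)
    next
      show "{B. B \<subseteq> {1..P} - S \<and> card B = K - card S} \<subseteq> (\<lambda>A. A - S) ` {A \<in> key_rings K P. S \<subseteq> A}"
      proof
        fix B assume B: "B \<in> {B. B \<subseteq> {1..P} - S \<and> card B = K - card S}"
        then have "finite B" using finite_subset[of B "{1..P}"] by auto
        then have "card (B \<union> S) = card B + card S" using B \<open>finite S\<close> by (intro card_Un_disjoint) auto
        then have "B \<union> S \<in> {A \<in> key_rings K P. S \<subseteq> A}" using B S assms(2) unfolding key_rings_def by auto
        moreover have "B = (B \<union> S) - S" using B by auto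
        ultimately show "B \<in> (\<lambda>A. A - S) ` {A \<in> key_rings K P. S \<subseteq> A}" by blast
      qed
    qed
  qed
  then have "rings_containing K P S = card {B. B \<subseteq> {1..P} - S \<and> card B = K - card S}"
    unfolding rings_containing_def by (rule bij_betw_same_card)
  also have "\<dots> = card ({1..P} - S) choose (K - card S)" by (rule n_subsets) auto
  also have "card ({1..P} - S) = P - card S" using S \<open>finite S\<close> by (simp add: card_Diff_subset)
  finally show ?thesis .
qed

lemma rings_containing_eq_0:
  assumes "K < card S"
  shows "rings_containing K P S = 0"
proof -
  have "card S \<le> card A" if "A \<in> key_rings K P" "S \<subseteq> A" for A
    using that finite_subset[of A "{1..P}"] by (intro card_mono) (auto simp: key_rings_def)
  then have "{A \<in> key_rings K P. S \<subseteq> A} = {}" using assms by (force simp: key_rings_def)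
  then show ?thesis unfolding rings_containing_def by (metis card.empty)
qed

lemma binomial_diff_mult_power_le:
  assumes "s \<le> K" "K \<le> P"
  shows "real ((P - s) choose (K - s)) * real P ^ s \<le> real (P choose K) * real K ^ s"
  using assms(1)
proof (induction s)
  case 0
  then show ?case by simp
next
  case (Suc s)
  let ?C = "real ((P - s) choose (K - s))" and ?C' = "real ((P - Suc s) choose (K - Suc s))"
  have "s < K" using Suc.prems by simp
  have "(K - s) * ((P - s) choose (K - s)) = (P - s) * ((P - Suc s) choose (K - Suc s))"
    using times_binomial_minus1_eq[of "K - s" "P - s"] \<open>s < K\<close> by simp
  then have "real (K - s) * ?C = real (P - s) * ?C'"
    by (metis of_nat_mult)
  then have rec: "(real K - real s) * ?C = (real P - real s) * ?C'"
    using \<open>s < K\<close> assms(2) by (simp add: of_nat_diff)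
  have "(real P - real s) * (?C' * real P) = real P * ((real K - real s) * ?C)"
    by (subst rec) (simp add: algebra_simps)
  also have "\<dots> \<le> (real P - real s) * (real K * ?C)"
    using \<open>s < K\<close> assms(2) by (simp add: algebra_simps mult_right_mono)
  finally have "?C' * real P \<le> real K * ?C"
    using \<open>s < K\<close> assms(2) by (simp add: mult_le_cancel_left)
  then have "(?C' * real P) * real P ^ s \<le> (real K * ?C) * real P ^ s"
    by (rule mult_right_mono) simp
  then have "?C' * real P ^ Suc s \<le> real K * (?C * real P ^ s)"
    by (simp add: algebra_simps)
  also have "\<dots> \<le> real K * (real (P choose K) * real K ^ s)"
    using Suc \<open>s < K\<close> by (intro mult_left_mono) auto
  finally show ?case by (simp add: algebra_simps)
qed

lemma rings_containing_le:
  assumes S: "S \<subseteq> {1..P}" and "1 \<le> K" "K \<le> P"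
  shows "real (rings_containing K P S) \<le> real (P choose K) * (real K / real P) ^ card S"
proof (cases "card S \<le> K")
  case True
  have "real (rings_containing K P S) * real P ^ card S \<le> real (P choose K) * real K ^ card S"
    using rings_containing_eq[OF S True] binomial_diff_mult_power_le[OF True assms(3)] by simp
  then show ?thesis using assms by (simp add: power_divide field_simps)
next
  case False
  then show ?thesis using rings_containing_eq_0[of K S P] by simp
qed

lemma rings_containing_singleton:
  assumes "x \<in> {1..P}" "1 \<le> K" "K \<le> P"
  shows "real (rings_containing K P {x}) = real (P choose K) * (real K / real P)"
proof -
  have "rings_containing K P {x} = (P - 1) choose (K - 1)"
    using rings_containing_eq[of "{x}" P K] assms by auto
  moreover have "K * (P choose K) = P * ((P - 1) choose (K - 1))"
    using times_binomial_minus1_eq[of K P] assms by simp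
  then have "real K * real (P choose K) = real P * real ((P - 1) choose (K - 1))"
    by (metis of_nat_mult)
  ultimately show ?thesis using assms by (simp add: field_simps)
qed

lemma rings_containing_doubleton:
  assumes "x \<in> {1..P}" "w \<in> {1..P}" "x \<noteq> w" "1 \<le> K" "K \<le> P"
  shows "real (rings_containing K P {x, w}) * (real P * (real P - 1))
           = real (P choose K) * (real K * (real K - 1))"
proof (cases "K = 1")
  case True
  then show ?thesis using rings_containing_eq_0[of K "{x, w}" P] assms by simp
next
  case False
  then have "2 \<le> K" using assms by simp
  define a where "a = real (P choose K)"
  define b where "b = real ((P - 1) choose (K - 1))"
  define c where "c = real ((P - 2) choose (K - 2))"
  have "card {x, w} = 2" using assms by simp
  then have count: "real (rings_containing K P {x, w}) = c"
    using rings_containing_eq[of "{x, w}" P K] assms \<open>2 \<le> K\<close> unfolding c_def by (simp add: numeral_2_eq_2)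
  have "(K - 1) * ((P - 1) choose (K - 1)) = (P - 1) * ((P - 2) choose (K - 2))"
    using times_binomial_minus1_eq[of "K - 1" "P - 1"] \<open>2 \<le> K\<close> by (simp add: numeral_2_eq_2)
  then have "real (K - 1) * b = real (P - 1) * c"
    unfolding b_def c_def by (metis of_nat_mult)
  then have bc: "(real K - 1) * b = (real P - 1) * c"
    using \<open>2 \<le> K\<close> assms by (simp add: of_nat_diff)
  have "K * (P choose K) = P * ((P - 1) choose (K - 1))"
    using times_binomial_minus1_eq[of K P] \<open>2 \<le> K\<close> by simp
  then have ab: "real K * a = real P * b" unfolding a_def b_def by (metis of_nat_mult)
  have "c * (real P * (real P - 1)) = real P * ((real P - 1) * c)" by (simp add: algebra_simps)
  also have "\<dots> = real P * ((real K - 1) * b)" by (simp only: bc)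
  also have "\<dots> = (real K - 1) * (real K * a)" by (simp only: ab mult.left_commute)
  also have "\<dots> = a * (real K * (real K - 1))" by (simp only: mult_ac)
  finally show ?thesis using count a_def by simp
qed

definition rings_box :: "nat \<Rightarrow> nat \<Rightarrow> nat set \<Rightarrow> nat set \<Rightarrow> nat set \<Rightarrow>
    (nat set \<times> nat set \<times> nat set) set" where
  "rings_box K P S1 S2 S3 = {A \<in> key_rings K P. S1 \<subseteq> A} \<times> {B \<in> key_rings K P. S2 \<subseteq> B} \<times>
      {C \<in> key_rings K P. S3 \<subseteq> C}"

lemma finite_rings_box: "finite (rings_box K P S1 S2 S3)"
  unfolding rings_box_def using finite_key_rings by auto

lemma card_rings_box:
  "card (rings_box K P S1 S2 S3) = rings_containing K P S1 * rings_containing K P S2 * rings_containing K P S3"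
  unfolding rings_box_def rings_containing_def by (simp add: card_cartesian_product)

lemma card_rings_box_le:
  assumes "S1 \<subseteq> {1..P}" "S2 \<subseteq> {1..P}" "S3 \<subseteq> {1..P}" "1 \<le> K" "K \<le> P"
  shows "real (card (rings_box K P S1 S2 S3))
           \<le> real (P choose K) ^ 3 * (real K / real P) ^ (card S1 + card S2 + card S3)"
proof -
  let ?N = "real (P choose K)" and ?r = "real K / real P"
  have "real (card (rings_box K P S1 S2 S3))
      = real (rings_containing K P S1) * real (rings_containing K P S2) * real (rings_containing K P S3)"
    by (simp add: card_rings_box)
  also have "\<dots> \<le> (?N * ?r ^ card S1) * (?N * ?r ^ card S2) * (?N * ?r ^ card S3)"
    using rings_containing_le[OF assms(1,4,5)] rings_containing_le[OF assms(2,4,5)]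
      rings_containing_le[OF assms(3,4,5)]
    by (intro mult_mono) auto
  also have "\<dots> = ?N ^ 3 * ?r ^ (card S1 + card S2 + card S3)"
    by (simp add: power_add algebra_simps power3_eq_cube)
  finally show ?thesis .
qed

section \<open>Upper bound on the probability of a triangle\<close>

lemma power_card_pairs_le:
  fixes r :: real
  assumes "0 \<le> r"
  shows "r ^ (card {x, z} + card {x, y} + card {y, z}) \<le>
    r ^ 6 + (if x = y then r ^ 5 else 0) + (if y = z then r ^ 5 else 0) + (if x = z then r ^ 5 else 0)
      + (if x = y \<and> y = z then r ^ 3 else 0)"
proof -
  have "card {x, z} + card {x, y} + card {y, z} =
      (if x = y \<and> y = z then 3 else if x = y \<or> y = z \<or> x = z then 5 else 6)"
    by (auto simp: card_insert_if)
  then show ?thesis using assms by auto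
qed

lemma sum3_diagonals:
  fixes r c d :: real
  assumes "finite I"
  shows "(\<Sum>x\<in>I. \<Sum>y\<in>I. \<Sum>z\<in>I. r ^ 6 + (if x = y then c else 0) + (if y = z then c else 0)
      + (if x = z then c else 0) + (if x = y \<and> y = z then d else 0))
    = real (card I) ^ 3 * r ^ 6 + 3 * real (card I) ^ 2 * c + real (card I) * d"
proof -
  let ?n = "real (card I)"
  have "(\<Sum>z\<in>I. if x = y \<and> y = z then d else 0) = (if x = y then d else 0)" if "y \<in> I" for x y
    using assms that by (cases "x = y") auto
  then have s4: "(\<Sum>x\<in>I. \<Sum>y\<in>I. \<Sum>z\<in>I. if x = y \<and> y = z then d else 0) = ?n * d"
    using assms by simp
  have "(\<Sum>x\<in>I. \<Sum>y\<in>I. \<Sum>z\<in>I. if x = y then c else 0) = ?n ^ 2 * c"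
    using assms by (simp add: power2_eq_square sum_distrib_left[symmetric])
  moreover have "(\<Sum>x\<in>I. \<Sum>y\<in>I. \<Sum>z\<in>I. if y = z then c else 0) = ?n ^ 2 * c"
    using assms by (simp add: power2_eq_square)
  moreover have "(\<Sum>x\<in>I. \<Sum>y\<in>I. \<Sum>z\<in>I. if x = z then c else 0) = ?n ^ 2 * c"
    using assms by (simp add: power2_eq_square)
  moreover have "(\<Sum>x\<in>I. \<Sum>y\<in>I. \<Sum>z\<in>I. r ^ 6) = ?n ^ 3 * r ^ 6"
    by (simp add: power3_eq_cube)
  ultimately show ?thesis
    using s4 by (simp only: sum.distrib)
qed

lemma meeting_triples_subset_rings_boxes:
  "meeting_triples K P \<subseteq> (\<Union>x\<in>{1..P}. \<Union>y\<in>{1..P}. \<Union>z\<in>{1..P}. rings_box K P {x, z} {x, y} {y, z})"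
proof
  fix t assume "t \<in> meeting_triples K P"
  then obtain A B C where t: "t = (A, B, C)" and R: "A \<in> key_rings K P" "B \<in> key_rings K P" "C \<in> key_rings K P"
    and "A \<inter> B \<noteq> {}" "B \<inter> C \<noteq> {}" "A \<inter> C \<noteq> {}"
    unfolding meeting_triples_def by auto
  then obtain x y z where "x \<in> A \<inter> B" "y \<in> B \<inter> C" "z \<in> A \<inter> C" by blast
  moreover have "A \<subseteq> {1..P}" "B \<subseteq> {1..P}" "C \<subseteq> {1..P}" using R unfolding key_rings_def by auto
  ultimately show "t \<in> (\<Union>x\<in>{1..P}. \<Union>y\<in>{1..P}. \<Union>z\<in>{1..P}. rings_box K P {x, z} {x, y} {y, z})"
    using R unfolding t rings_box_def by blast
qed

lemma meet_prob_le:
  assumes "1 \<le> K" "K \<le> P"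
  shows "meet_prob K P \<le> real K ^ 3 / real P ^ 2 + real K ^ 6 / real P ^ 3 + 3 * real K ^ 5 / real P ^ 3"
proof -
  let ?I = "{1..P}" and ?N = "real (P choose K)" and ?r = "real K / real P"
  let ?B = "\<lambda>x y z. rings_box K P {x, z} {x, y} {y, z}"
  let ?w = "\<lambda>x y z. ?r ^ 6 + (if x = y then ?r ^ 5 else 0) + (if y = z then ?r ^ 5 else 0)
      + (if x = z then ?r ^ 5 else 0) + (if x = y \<and> y = z then ?r ^ 3 else 0)"
  have "card (meeting_triples K P) \<le> card (\<Union>x\<in>?I. \<Union>y\<in>?I. \<Union>z\<in>?I. ?B x y z)"
    by (intro card_mono meeting_triples_subset_rings_boxes) (simp add: finite_rings_box)
  also have "\<dots> \<le> (\<Sum>x\<in>?I. \<Sum>y\<in>?I. \<Sum>z\<in>?I. card (?B x y z))"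
    by (intro card_UN_le[THEN order_trans] sum_mono) simp_all
  finally have "real (card (meeting_triples K P)) \<le> (\<Sum>x\<in>?I. \<Sum>y\<in>?I. \<Sum>z\<in>?I. real (card (?B x y z)))"
    by (metis (no_types, lifting) of_nat_le_iff of_nat_sum sum.cong)
  also have "\<dots> \<le> (\<Sum>x\<in>?I. \<Sum>y\<in>?I. \<Sum>z\<in>?I. ?N ^ 3 * ?w x y z)"
  proof (intro sum_mono)
    fix x y z assume "x \<in> ?I" "y \<in> ?I" "z \<in> ?I"
    then have "real (card (?B x y z)) \<le> ?N ^ 3 * ?r ^ (card {x, z} + card {x, y} + card {y, z})"
      using assms by (intro card_rings_box_le) auto
    also have "\<dots> \<le> ?N ^ 3 * ?w x y z"
      by (intro mult_left_mono power_card_pairs_le) simp_all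
    finally show "real (card (?B x y z)) \<le> ?N ^ 3 * ?w x y z" .
  qed
  also have "\<dots> = ?N ^ 3 * (real P ^ 3 * ?r ^ 6 + 3 * real P ^ 2 * ?r ^ 5 + real P * ?r ^ 3)"
    by (simp add: sum_distrib_left[symmetric] sum3_diagonals)
  finally have "meet_prob K P \<le> real P ^ 3 * ?r ^ 6 + 3 * real P ^ 2 * ?r ^ 5 + real P * ?r ^ 3"
    unfolding meet_prob_def card_key_rings using assms by (simp add: field_simps)
  also have "\<dots> = real K ^ 3 / real P ^ 2 + real K ^ 6 / real P ^ 3 + 3 * real K ^ 5 / real P ^ 3"
    using assms by (simp add: power_divide field_simps eval_nat_numeral)
  finally show ?thesis .
qed

section \<open>Lower bound on the probability of a triangle\<close>

lemma real_card_UN_le: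
  "finite W \<Longrightarrow> real (card (\<Union>w\<in>W. F w)) \<le> (\<Sum>w\<in>W. real (card (F w)))"
  by (metis card_UN_le of_nat_le_iff of_nat_sum)

lemma card_le_card_Un:
  "X \<subseteq> Z \<union> U \<Longrightarrow> finite Z \<Longrightarrow> finite U \<Longrightarrow> card X \<le> card Z + card U"
  by (meson card_Un_le card_mono finite_UnI order_trans)

definition common_key_triples :: "nat \<Rightarrow> nat \<Rightarrow> nat \<Rightarrow> (nat set \<times> nat set \<times> nat set) set" where
  "common_key_triples K P x = {(A, B, C). A \<in> key_rings K P \<and> B \<in> key_rings K P \<and> C \<in> key_rings K P \<and>
      A \<inter> B \<inter> C = {x}}"

definition distinct_meet_triples ::
    "nat \<Rightarrow> nat \<Rightarrow> nat \<times> nat \<times> nat \<Rightarrow> (nat set \<times> nat set \<times> nat set) set" where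
  "distinct_meet_triples K P t = (case t of (x, y, z) \<Rightarrow>
      {(A, B, C). A \<in> key_rings K P \<and> B \<in> key_rings K P \<and> C \<in> key_rings K P \<and>
        A \<inter> B = {x} \<and> B \<inter> C = {y} \<and> A \<inter> C = {z}})"

definition distinct_keys3 :: "nat \<Rightarrow> (nat \<times> nat \<times> nat) set" where
  "distinct_keys3 P = {(x, y, z). x \<in> {1..P} \<and> y \<in> {1..P} \<and> z \<in> {1..P} \<and> x \<noteq> y \<and> y \<noteq> z \<and> x \<noteq> z}"

lemma finite_key_triples: "finite (key_rings K P \<times> key_rings K P \<times> key_rings K P)"
  using finite_key_rings by blast

lemma finite_common_key_triples: "finite (common_key_triples K P x)"
  by (rule finite_subset[OF _ finite_key_triples]) (auto simp: common_key_triples_def)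

lemma finite_distinct_meet_triples: "finite (distinct_meet_triples K P t)"
  by (rule finite_subset[OF _ finite_key_triples]) (auto simp: distinct_meet_triples_def split: prod.splits)

lemma finite_distinct_keys3: "finite (distinct_keys3 P)"
  by (rule finite_subset[of _ "{1..P} \<times> {1..P} \<times> {1..P}"]) (auto simp: distinct_keys3_def)

lemma card_distinct_keys3_le: "card (distinct_keys3 P) \<le> P ^ 3"
proof -
  have "card (distinct_keys3 P) \<le> card ({1..P} \<times> {1..P} \<times> {1..P})"
    by (rule card_mono) (auto simp: distinct_keys3_def)
  then show ?thesis by (simp add: card_cartesian_product power3_eq_cube)
qed

lemma card_distinct_keys3_ge: "P ^ 3 \<le> card (distinct_keys3 P) + 3 * P ^ 2"
proof -
  let ?I = "{1..P::nat}"
  let ?D1 = "(\<lambda>(x, z). (x, x, z)) ` (?I \<times> ?I)" and ?D2 = "(\<lambda>(x, y). (x, y, y)) ` (?I \<times> ?I)"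
    and ?D3 = "(\<lambda>(x, y). (x, y, x)) ` (?I \<times> ?I)"
  let ?D = "?D1 \<union> ?D2 \<union> ?D3"
  have D: "card (f ` (?I \<times> ?I)) \<le> P ^ 2" for f :: "nat \<times> nat \<Rightarrow> nat \<times> nat \<times> nat"
    using card_image_le[of "?I \<times> ?I" f] by (simp add: card_cartesian_product power2_eq_square)
  have "card ?D \<le> card ?D1 + card ?D2 + card ?D3"
    by (meson add_right_mono card_Un_le order_trans)
  also have "\<dots> \<le> P ^ 2 + P ^ 2 + P ^ 2"
    by (intro add_mono D)
  finally have "card ?D \<le> 3 * P ^ 2" by simp
  moreover have "card (?I \<times> ?I \<times> ?I) \<le> card (distinct_keys3 P) + card ?D"
    by (rule card_le_card_Un[OF _ finite_distinct_keys3]) (auto simp: distinct_keys3_def)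
  ultimately show ?thesis by (simp add: card_cartesian_product power3_eq_cube)
qed

lemma card_common_key_triples_ge:
  assumes x: "x \<in> {1..P}" and KP: "1 \<le> K" "K \<le> P"
  shows "real (P choose K) ^ 3 * (real K / real P) ^ 3 - real P * (real (P choose K) ^ 3 * (real K / real P) ^ 6)
           \<le> real (card (common_key_triples K P x))"
proof -
  let ?I = "{1..P}" and ?N = "real (P choose K)" and ?r = "real K / real P"
  let ?U = "\<Union>w\<in>?I - {x}. rings_box K P {x, w} {x, w} {x, w}"
  have "rings_box K P {x} {x} {x} \<subseteq> common_key_triples K P x \<union> ?U"
  proof
    fix t assume t: "t \<in> rings_box K P {x} {x} {x}"
    then obtain A B C where ABC: "t = (A, B, C)" "A \<in> key_rings K P" "B \<in> key_rings K P" "C \<in> key_rings K P"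
      "x \<in> A \<inter> B \<inter> C"
      unfolding rings_box_def by auto
    show "t \<in> common_key_triples K P x \<union> ?U"
    proof (cases "A \<inter> B \<inter> C = {x}")
      case True
      then show ?thesis using ABC unfolding common_key_triples_def by auto
    next
      case False
      then obtain w where "w \<in> A \<inter> B \<inter> C" "w \<noteq> x" using ABC(5) by blast
      moreover have "w \<in> ?I" using \<open>w \<in> A \<inter> B \<inter> C\<close> ABC(2) unfolding key_rings_def by auto
      ultimately show ?thesis using ABC unfolding rings_box_def by blast
    qed
  qed
  then have "card (rings_box K P {x} {x} {x}) \<le> card (common_key_triples K P x) + card ?U"
    by (rule card_le_card_Un) (simp_all add: finite_common_key_triples finite_rings_box)
  moreover have "real (card (rings_box K P {x} {x} {x})) = ?N ^ 3 * ?r ^ 3"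
    using rings_containing_singleton[OF x KP] by (simp add: card_rings_box power3_eq_cube)
  moreover have "real (card ?U) \<le> real P * (?N ^ 3 * ?r ^ 6)"
  proof -
    have "real (card ?U) \<le> (\<Sum>w\<in>?I - {x}. real (card (rings_box K P {x, w} {x, w} {x, w})))"
      by (rule real_card_UN_le) simp
    also have "\<dots> \<le> (\<Sum>w\<in>?I - {x}. ?N ^ 3 * ?r ^ 6)"
    proof (rule sum_mono)
      fix w assume w: "w \<in> ?I - {x}"
      then have "real (card (rings_box K P {x, w} {x, w} {x, w}))
          \<le> ?N ^ 3 * ?r ^ (card {x, w} + card {x, w} + card {x, w})"
        using x KP by (intro card_rings_box_le) auto
      also have "card {x, w} + card {x, w} + card {x, w} = 6" using w by simp
      finally show "real (card (rings_box K P {x, w} {x, w} {x, w})) \<le> ?N ^ 3 * ?r ^ 6" .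
    qed
    also have "\<dots> \<le> real P * (?N ^ 3 * ?r ^ 6)"
      using x by (simp add: mult_right_mono)
    finally show ?thesis .
  qed
  ultimately show ?thesis by linarith
qed

text \<open>A triple of the box of witnesses \<open>x, y, z\<close> that shares a further key \<open>w\<close> lies in a box
  with at least one more prescribed key, and two more unless \<open>w \<in> {x, y, z}\<close>.\<close>

lemma card_UN_rings_box_le:
  fixes S1 S2 S3 :: "nat \<Rightarrow> nat set"
  assumes xyz: "x \<in> {1..P}" "y \<in> {1..P}" "z \<in> {1..P}" and KP: "1 \<le> K" "K \<le> P"
    and S: "\<And>w. w \<in> {1..P} - {v} \<Longrightarrow> S1 w \<subseteq> {1..P} \<and> S2 w \<subseteq> {1..P} \<and> S3 w \<subseteq> {1..P}"
    and card7: "\<And>w. w \<in> {1..P} - {v} \<Longrightarrow> 7 \<le> card (S1 w) + card (S2 w) + card (S3 w)"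
    and card8: "\<And>w. w \<in> {1..P} - {v} \<Longrightarrow> w \<notin> {x, y, z} \<Longrightarrow> 8 \<le> card (S1 w) + card (S2 w) + card (S3 w)"
  shows "real (card (\<Union>w\<in>{1..P} - {v}. rings_box K P (S1 w) (S2 w) (S3 w)))
           \<le> real (P choose K) ^ 3 * (real P * (real K / real P) ^ 8 + 3 * (real K / real P) ^ 7)"
proof -
  let ?I = "{1..P}" and ?N = "real (P choose K)" and ?r = "real K / real P"
  let ?g = "\<lambda>w. ?N ^ 3 * (?r ^ 8 + (if w \<in> {x, y, z} then ?r ^ 7 else 0))"
  have r: "0 \<le> ?r" "?r \<le> 1" using KP by auto
  have "real (card (\<Union>w\<in>?I - {v}. rings_box K P (S1 w) (S2 w) (S3 w)))
      \<le> (\<Sum>w\<in>?I - {v}. real (card (rings_box K P (S1 w) (S2 w) (S3 w))))"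
    by (rule real_card_UN_le) simp
  also have "\<dots> \<le> (\<Sum>w\<in>?I - {v}. ?g w)"
  proof (rule sum_mono)
    fix w assume w: "w \<in> ?I - {v}"
    have "real (card (rings_box K P (S1 w) (S2 w) (S3 w)))
        \<le> ?N ^ 3 * ?r ^ (card (S1 w) + card (S2 w) + card (S3 w))"
      using S[OF w] KP by (intro card_rings_box_le) auto
    moreover have "?r ^ (card (S1 w) + card (S2 w) + card (S3 w)) \<le> ?r ^ 8 + (if w \<in> {x, y, z} then ?r ^ 7 else 0)"
    proof (cases "w \<in> {x, y, z}")
      case True
      then show ?thesis using r power_decreasing[OF card7[OF w] r] by (simp add: add_increasing)
    next
      case False
      then show ?thesis using r power_decreasing[OF card8[OF w False] r] by simp
    qed
    ultimately show "real (card (rings_box K P (S1 w) (S2 w) (S3 w))) \<le> ?g w"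
      by (meson mult_left_mono order_trans zero_le_power of_nat_0_le_iff)
  qed
  also have "\<dots> \<le> (\<Sum>w\<in>?I. ?g w)"
    by (rule sum_mono2) auto
  also have "\<dots> = ?N ^ 3 * (real P * ?r ^ 8 + real (card {x, y, z}) * ?r ^ 7)"
  proof -
    have "(\<Sum>w\<in>?I. if w \<in> {x, y, z} then ?r ^ 7 else 0) = (\<Sum>w\<in>{w\<in>?I. w \<in> {x, y, z}}. ?r ^ 7)"
      by (rule sum.inter_filter[symmetric]) simp
    also have "{w\<in>?I. w \<in> {x, y, z}} = {x, y, z}" using xyz by auto
    finally have "(\<Sum>w\<in>?I. if w \<in> {x, y, z} then ?r ^ 7 else 0) = real (card {x, y, z}) * ?r ^ 7"
      by simp
    then show ?thesis by (simp add: sum.distrib sum_distrib_left[symmetric])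
  qed
  also have "\<dots> \<le> ?N ^ 3 * (real P * ?r ^ 8 + 3 * ?r ^ 7)"
    using r card_insert_le_m1[of 3 "{y, z}" x] by (intro mult_left_mono add_left_mono mult_right_mono)
      (auto simp: card_insert_if)
  finally show ?thesis .
qed

lemma card_distinct_meet_triples_ge:
  assumes xyz: "x \<in> {1..P}" "y \<in> {1..P}" "z \<in> {1..P}" "x \<noteq> y" "y \<noteq> z" "x \<noteq> z"
    and KP: "1 \<le> K" "K \<le> P"
  shows "(real (P choose K) * (real K * (real K - 1)) / (real P * (real P - 1))) ^ 3
           - 3 * (real (P choose K) ^ 3 * (real P * (real K / real P) ^ 8 + 3 * (real K / real P) ^ 7))
         \<le> real (card (distinct_meet_triples K P (x, y, z)))"
proof -
  let ?I = "{1..P}" and ?N = "real (P choose K)" and ?r = "real K / real P"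
  let ?c2 = "?N * (real K * (real K - 1)) / (real P * (real P - 1))"
  let ?B = "?N ^ 3 * (real P * ?r ^ 8 + 3 * ?r ^ 7)"
  let ?X = "rings_box K P {x, z} {x, y} {y, z}"
  let ?U1 = "\<Union>w\<in>?I - {x}. rings_box K P {x, z, w} {x, y, w} {y, z}"
  let ?U2 = "\<Union>w\<in>?I - {y}. rings_box K P {x, z} {x, y, w} {y, z, w}"
  let ?U3 = "\<Union>w\<in>?I - {z}. rings_box K P {x, z, w} {x, y} {y, z, w}"
  have "?X \<subseteq> distinct_meet_triples K P (x, y, z) \<union> (?U1 \<union> ?U2 \<union> ?U3)"
  proof
    fix t assume "t \<in> ?X"
    then obtain A B C where t: "t = (A, B, C)" and R: "A \<in> key_rings K P" "B \<in> key_rings K P" "C \<in> key_rings K P"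
      and inc: "x \<in> A \<inter> B" "y \<in> B \<inter> C" "z \<in> A \<inter> C"
      unfolding rings_box_def by auto
    have sub: "A \<subseteq> ?I" "B \<subseteq> ?I" "C \<subseteq> ?I" using R unfolding key_rings_def by auto
    show "t \<in> distinct_meet_triples K P (x, y, z) \<union> (?U1 \<union> ?U2 \<union> ?U3)"
    proof (cases "A \<inter> B = {x} \<and> B \<inter> C = {y} \<and> A \<inter> C = {z}")
      case True
      then show ?thesis using R unfolding t distinct_meet_triples_def by auto
    next
      case False
      then consider w where "w \<in> A \<inter> B" "w \<noteq> x" | w where "w \<in> B \<inter> C" "w \<noteq> y"
        | w where "w \<in> A \<inter> C" "w \<noteq> z"
        using inc by blast
      then show ?thesis
        by cases (use R inc sub in \<open>auto simp: t rings_box_def\<close>)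
    qed
  qed
  then have "card ?X \<le> card (distinct_meet_triples K P (x, y, z)) + card (?U1 \<union> ?U2 \<union> ?U3)"
    by (rule card_le_card_Un) (simp_all add: finite_rings_box finite_distinct_meet_triples)
  also have "card (?U1 \<union> ?U2 \<union> ?U3) \<le> card ?U1 + card ?U2 + card ?U3"
    by (meson add_right_mono card_Un_le order_trans)
  finally have "real (card ?X)
      \<le> real (card (distinct_meet_triples K P (x, y, z))) + real (card ?U1) + real (card ?U2) + real (card ?U3)"
    by linarith
  moreover have "real (rings_containing K P {a, b}) = ?c2" if "a \<in> ?I" "b \<in> ?I" "a \<noteq> b" for a b
    using rings_containing_doubleton[OF that KP] xyz by (simp add: eq_divide_eq)
  then have "real (card ?X) = ?c2 ^ 3"
    using xyz by (simp add: card_rings_box power3_eq_cube)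
  moreover have "real (card ?U1) \<le> ?B" "real (card ?U2) \<le> ?B" "real (card ?U3) \<le> ?B"
    by (rule card_UN_rings_box_le[OF xyz(1-3) KP]; use xyz in \<open>auto simp: card_insert_if\<close>)+
  ultimately show ?thesis by linarith
qed

lemma mem_common_key_triples:
  "(A, B, C) \<in> common_key_triples K P x \<longleftrightarrow>
     A \<in> key_rings K P \<and> B \<in> key_rings K P \<and> C \<in> key_rings K P \<and> A \<inter> B \<inter> C = {x}"
  by (simp add: common_key_triples_def)

lemma mem_distinct_meet_triples:
  "(A, B, C) \<in> distinct_meet_triples K P (x, y, z) \<longleftrightarrow>
     A \<in> key_rings K P \<and> B \<in> key_rings K P \<and> C \<in> key_rings K P \<and>
     A \<inter> B = {x} \<and> B \<inter> C = {y} \<and> A \<inter> C = {z}"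
  by (simp add: distinct_meet_triples_def)

lemma mem_meeting_triples:
  "(A, B, C) \<in> meeting_triples K P \<longleftrightarrow>
     A \<in> key_rings K P \<and> B \<in> key_rings K P \<and> C \<in> key_rings K P \<and>
     A \<inter> B \<noteq> {} \<and> B \<inter> C \<noteq> {} \<and> A \<inter> C \<noteq> {}"
  by (simp add: meeting_triples_def)

lemma sum_card_le_card_meeting_triples:
  "(\<Sum>x\<in>{1..P}. card (common_key_triples K P x)) + (\<Sum>t\<in>distinct_keys3 P. card (distinct_meet_triples K P t))
     \<le> card (meeting_triples K P)"
proof -
  let ?E = "\<Union>x\<in>{1..P}. common_key_triples K P x"
  let ?F = "\<Union>t\<in>distinct_keys3 P. distinct_meet_triples K P t"
  have "card ?E = (\<Sum>x\<in>{1..P}. card (common_key_triples K P x))"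
  proof (rule card_UN_disjoint)
    show "\<forall>x\<in>{1..P}. \<forall>y\<in>{1..P}. x \<noteq> y \<longrightarrow> common_key_triples K P x \<inter> common_key_triples K P y = {}"
    proof (intro ballI impI equals0I)
      fix x y s assume "x \<noteq> y" "s \<in> common_key_triples K P x \<inter> common_key_triples K P y"
      then show False by (cases s) (auto simp: mem_common_key_triples)
    qed
  qed (simp_all add: finite_common_key_triples)
  moreover have "card ?F = (\<Sum>t\<in>distinct_keys3 P. card (distinct_meet_triples K P t))"
  proof (rule card_UN_disjoint)
    show "\<forall>t\<in>distinct_keys3 P. \<forall>u\<in>distinct_keys3 P. t \<noteq> u \<longrightarrow>
        distinct_meet_triples K P t \<inter> distinct_meet_triples K P u = {}"
    proof (intro ballI impI equals0I)
      fix t u s assume "t \<noteq> u" "s \<in> distinct_meet_triples K P t \<inter> distinct_meet_triples K P u"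
      then show False by (cases s, cases t, cases u) (auto simp: mem_distinct_meet_triples)
    qed
  qed (simp_all add: finite_distinct_keys3 finite_distinct_meet_triples)
  moreover have "?E \<inter> ?F = {}"
  proof (intro equals0I)
    fix s assume "s \<in> ?E \<inter> ?F"
    then obtain x a b c A B C where "s = (A, B, C)" "A \<inter> B \<inter> C = {x}" "(a, b, c) \<in> distinct_keys3 P"
      "A \<inter> B = {a}" "B \<inter> C = {b}"
      by (cases s) (auto simp: mem_common_key_triples mem_distinct_meet_triples)
    then show False unfolding distinct_keys3_def by auto
  qed
  then have "card (?E \<union> ?F) = card ?E + card ?F"
    by (intro card_Un_disjoint) (simp_all add: finite_common_key_triples finite_distinct_meet_triples finite_distinct_keys3)
  moreover have "?E \<union> ?F \<subseteq> meeting_triples K P"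
  proof
    fix s assume "s \<in> ?E \<union> ?F"
    then show "s \<in> meeting_triples K P"
      by (cases s) (auto simp: mem_common_key_triples mem_distinct_meet_triples mem_meeting_triples)
  qed
  then have "card (?E \<union> ?F) \<le> card (meeting_triples K P)"
    by (rule card_mono[OF finite_subset[OF _ finite_key_triples], rotated]) (auto simp: mem_meeting_triples)
  ultimately show ?thesis by simp
qed

text \<open>The first two terms come from triples meeting in a single common key, the remaining ones
  from triples whose pairwise intersections are three distinct single keys.\<close>

lemma meet_prob_ge:
  assumes KP: "1 \<le> K" "K \<le> P"
  shows "real P * (real K / real P) ^ 3 - real P ^ 2 * (real K / real P) ^ 6
         + (real P ^ 3 - 3 * real P ^ 2) * ((real K * (real K - 1)) / (real P * (real P - 1))) ^ 3
         - 3 * real P ^ 3 * (real P * (real K / real P) ^ 8 + 3 * (real K / real P) ^ 7) \<le> meet_prob K P"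
proof -
  let ?I = "{1..P}" and ?N = "real (P choose K)" and ?r = "real K / real P"
  let ?rho = "(real K * (real K - 1)) / (real P * (real P - 1))"
  let ?B = "?N ^ 3 * (real P * ?r ^ 8 + 3 * ?r ^ 7)"
  have N: "?N > 0" using KP by simp
  have rho: "?rho \<ge> 0" using KP by simp
  have "(\<Sum>x\<in>?I. ?N ^ 3 * ?r ^ 3 - real P * (?N ^ 3 * ?r ^ 6))
      \<le> (\<Sum>x\<in>?I. real (card (common_key_triples K P x)))"
    by (rule sum_mono) (rule card_common_key_triples_ge[OF _ KP])
  then have E: "real P * (?N ^ 3 * ?r ^ 3 - real P * (?N ^ 3 * ?r ^ 6))
      \<le> (\<Sum>x\<in>?I. real (card (common_key_triples K P x)))"
    by (simp only: sum_constant card_atLeastAtMost diff_Suc_1)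
  have "(\<Sum>t\<in>distinct_keys3 P. (?N * ?rho) ^ 3 - 3 * ?B)
      \<le> (\<Sum>t\<in>distinct_keys3 P. real (card (distinct_meet_triples K P t)))"
  proof (rule sum_mono)
    fix t assume "t \<in> distinct_keys3 P"
    then obtain x y z where t: "t = (x, y, z)" and xyz: "x \<in> ?I" "y \<in> ?I" "z \<in> ?I" "x \<noteq> y" "y \<noteq> z" "x \<noteq> z"
      unfolding distinct_keys3_def by auto
    show "(?N * ?rho) ^ 3 - 3 * ?B \<le> real (card (distinct_meet_triples K P t))"
      unfolding t times_divide_eq_right by (rule card_distinct_meet_triples_ge[OF xyz KP])
  qed
  moreover have "real (P ^ 3) \<le> real (card (distinct_keys3 P) + 3 * P ^ 2)"
    using card_distinct_keys3_ge[of P] by (simp only: of_nat_le_iff)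
  then have "real P ^ 3 - 3 * real P ^ 2 \<le> real (card (distinct_keys3 P))"
    by (simp only: of_nat_add of_nat_mult of_nat_power of_nat_numeral)
  then have "(real P ^ 3 - 3 * real P ^ 2) * (?N * ?rho) ^ 3 \<le> real (card (distinct_keys3 P)) * (?N * ?rho) ^ 3"
    by (rule mult_right_mono) (use N rho in \<open>intro zero_le_power mult_nonneg_nonneg; auto\<close>)
  moreover have "real (card (distinct_keys3 P)) * (3 * ?B) \<le> real P ^ 3 * (3 * ?B)"
    using card_distinct_keys3_le[of P] by (intro mult_right_mono) (simp_all flip: of_nat_power)
  moreover have "(\<Sum>t\<in>distinct_keys3 P. (?N * ?rho) ^ 3 - 3 * ?B)
      = real (card (distinct_keys3 P)) * (?N * ?rho) ^ 3 - real (card (distinct_keys3 P)) * (3 * ?B)"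
    by (simp only: sum_subtractf sum_constant)
  ultimately have F: "(real P ^ 3 - 3 * real P ^ 2) * (?N * ?rho) ^ 3 - real P ^ 3 * (3 * ?B)
      \<le> (\<Sum>t\<in>distinct_keys3 P. real (card (distinct_meet_triples K P t)))"
    by linarith
  have "N ^ 3 * (p * r ^ 3 - p ^ 2 * r ^ 6 + (p ^ 3 - 3 * p ^ 2) * \<rho> ^ 3 - 3 * p ^ 3 * b)
      = p * (N ^ 3 * r ^ 3 - p * (N ^ 3 * r ^ 6)) + ((p ^ 3 - 3 * p ^ 2) * (N * \<rho>) ^ 3 - p ^ 3 * (3 * (N ^ 3 * b)))"
    for N p r \<rho> b :: real
    by (simp add: algebra_simps power_mult_distrib power2_eq_square)
  then have "?N ^ 3 * (real P * ?r ^ 3 - real P ^ 2 * ?r ^ 6 + (real P ^ 3 - 3 * real P ^ 2) * ?rho ^ 3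
         - 3 * real P ^ 3 * (real P * ?r ^ 8 + 3 * ?r ^ 7))
      = real P * (?N ^ 3 * ?r ^ 3 - real P * (?N ^ 3 * ?r ^ 6))
        + ((real P ^ 3 - 3 * real P ^ 2) * (?N * ?rho) ^ 3 - real P ^ 3 * (3 * ?B))" .
  also have "\<dots> \<le> real (card (meeting_triples K P))"
  proof -
    have "(\<Sum>x\<in>?I. real (card (common_key_triples K P x)))
        + (\<Sum>t\<in>distinct_keys3 P. real (card (distinct_meet_triples K P t))) \<le> real (card (meeting_triples K P))"
      using sum_card_le_card_meeting_triples[of K P, THEN of_nat_mono[where 'a = real]]
      by (simp only: of_nat_add of_nat_sum)
    then show ?thesis using E F by linarith
  qed
  finally show ?thesis unfolding meet_prob_def card_key_rings using N
    by (simp add: pos_le_divide_eq mult.commute)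
qed

section \<open>Comparison with the main term and with \<open>q\<close>\<close>

definition meet_main_term :: "nat \<Rightarrow> nat \<Rightarrow> real" where
  "meet_main_term K P = real K ^ 3 / real P ^ 2 + real K ^ 6 / real P ^ 3"

lemma meet_main_term_eq:
  assumes "0 < K" "0 < P"
  shows "meet_main_term K P = (real K ^ 2 / real P) ^ 3 * (1 + real P / real K ^ 3)"
  using assms unfolding meet_main_term_def by (simp add: field_simps power2_eq_square power3_eq_cube eval_nat_numeral)

lemma meet_prob_le_main_term:
  assumes "1 \<le> K" "K \<le> P"
  shows "meet_prob K P \<le> meet_main_term K P * (1 + 3 * (real K ^ 2 / real P))"
proof -
  have "meet_main_term K P * (1 + 3 * (real K ^ 2 / real P))
      = real K ^ 3 / real P ^ 2 + real K ^ 6 / real P ^ 3 + 3 * real K ^ 5 / real P ^ 3 + 3 * real K ^ 8 / real P ^ 4"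
    using assms unfolding meet_main_term_def by (simp add: field_simps eval_nat_numeral)
  moreover have "0 \<le> 3 * real K ^ 8 / real P ^ 4" by simp
  ultimately show ?thesis using meet_prob_le[OF assms] by linarith
qed

lemma main_term_le_meet_lower_bound:
  fixes k p :: real
  assumes k: "k \<ge> 1" and p: "p \<ge> 3"
  shows "(k ^ 3 / p ^ 2 + k ^ 6 / p ^ 3) * (1 - (4 / p + 3 * (k ^ 2 / p) + 9 * (k / p)))
    \<le> p * (k / p) ^ 3 - p ^ 2 * (k / p) ^ 6
         + (p ^ 3 - 3 * p ^ 2) * ((k * (k - 1)) / (p * (p - 1))) ^ 3
         - 3 * p ^ 3 * (p * (k / p) ^ 8 + 3 * (k / p) ^ 7)"
proof -
  have "k ^ 6 - 3 * k ^ 5 \<le> (k * (k - 1)) ^ 3"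
  proof -
    have "(k * (k - 1)) ^ 3 - (k ^ 6 - 3 * k ^ 5) = k ^ 3 * (3 * k - 1)"
      by (simp add: algebra_simps power2_eq_square power3_eq_cube eval_nat_numeral)
    moreover have "k ^ 3 * (3 * k - 1) \<ge> 0" using k by simp
    ultimately show ?thesis by linarith
  qed
  then have "(k ^ 6 - 3 * k ^ 5) / p ^ 6 \<le> (k * (k - 1)) ^ 3 / p ^ 6"
    using p by (intro divide_right_mono) auto
  also have "\<dots> = ((k * (k - 1)) / p ^ 2) ^ 3" by (simp add: power_divide power_mult[symmetric])
  also have "\<dots> \<le> ((k * (k - 1)) / (p * (p - 1))) ^ 3"
  proof (rule power_mono)
    have "p * (p - 1) > 0" "p * (p - 1) \<le> p ^ 2" using p by (auto simp: power2_eq_square algebra_simps)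
    moreover have "k * (k - 1) \<ge> 0" using k by simp
    ultimately show "(k * (k - 1)) / p ^ 2 \<le> (k * (k - 1)) / (p * (p - 1))"
      using p by (intro divide_left_mono mult_pos_pos) auto
    show "0 \<le> (k * (k - 1)) / p ^ 2" using \<open>k * (k - 1) \<ge> 0\<close> by simp
  qed
  finally have "(p ^ 3 - 3 * p ^ 2) * ((k ^ 6 - 3 * k ^ 5) / p ^ 6)
      \<le> (p ^ 3 - 3 * p ^ 2) * ((k * (k - 1)) / (p * (p - 1))) ^ 3"
  proof (rule mult_left_mono)
    have "p ^ 3 - 3 * p ^ 2 = p ^ 2 * (p - 3)" by (simp add: algebra_simps power2_eq_square power3_eq_cube)
    then show "0 \<le> p ^ 3 - 3 * p ^ 2" using p by simp
  qed
  moreover have "p * (k / p) ^ 3 - p ^ 2 * (k / p) ^ 6 + (p ^ 3 - 3 * p ^ 2) * ((k ^ 6 - 3 * k ^ 5) / p ^ 6)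
         - 3 * p ^ 3 * (p * (k / p) ^ 8 + 3 * (k / p) ^ 7)
       - (k ^ 3 / p ^ 2 + k ^ 6 / p ^ 3) * (1 - (4 / p + 3 * (k ^ 2 / p) + 9 * (k / p)))
       = (9 * k ^ 5 * p ^ 2 + 4 * k ^ 3 * p ^ 3 + 9 * k ^ 4 * p ^ 3) / p ^ 6"
    using p by (simp add: field_simps power_divide eval_nat_numeral)
  moreover have "(9 * k ^ 5 * p ^ 2 + 4 * k ^ 3 * p ^ 3 + 9 * k ^ 4 * p ^ 3) / p ^ 6 \<ge> 0"
    using k p by simp
  ultimately show ?thesis by linarith
qed

lemma main_term_le_meet_prob:
  assumes "1 \<le> K" "K \<le> P" "3 \<le> P"
  shows "meet_main_term K P * (1 - (4 / real P + 3 * (real K ^ 2 / real P) + 9 * (real K / real P)))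
           \<le> meet_prob K P"
  using main_term_le_meet_lower_bound[of "real K" "real P"] meet_prob_ge[of K P] assms
  unfolding meet_main_term_def by (simp add: numeral_le_real_of_nat_iff)

lemma binomial_diff_Suc_eq:
  assumes "j < K" "2 * K \<le> P"
  shows "real ((P - Suc j) choose K) = (1 - real K / (real P - real j)) * real ((P - j) choose K)"
proof -
  have "(P - j - K) * ((P - j) choose K) = (P - j) * ((P - Suc j) choose K)"
    using binomial_absorb_comp[of "P - j" K] by simp
  then have "real (P - j - K) * real ((P - j) choose K) = real (P - j) * real ((P - Suc j) choose K)"
    by (metis of_nat_mult)
  moreover have "real (P - j - K) = real P - real j - real K" "real (P - j) = real P - real j"
    using assms by (auto simp: of_nat_diff)
  moreover have "real P - real j > 0" using assms by linarith
  ultimately show ?thesis by (simp add: field_simps)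
qed

lemma binomial_diff_bounds:
  assumes "j \<le> K" "1 \<le> K" "2 * K \<le> P"
  shows "real (P choose K) * (1 - real K / (real P - real K)) ^ j \<le> real ((P - j) choose K)
       \<and> real ((P - j) choose K) \<le> real (P choose K) * (1 - real K / real P) ^ j"
  using assms(1)
proof (induction j)
  case 0
  then show ?case by simp
next
  case (Suc j)
  then have "j < K" by simp
  let ?C = "real ((P - j) choose K)" and ?f = "1 - real K / (real P - real j)"
  have PK: "real K \<le> real P - real K" and Pj: "real P - real K < real P - real j" and "0 < real K"
    using assms \<open>j < K\<close> by simp_all
  then have lo: "1 - real K / (real P - real K) \<le> ?f" and hi: "?f \<le> 1 - real K / real P"
    by (simp_all add: frac_le)
  have lo0: "0 \<le> 1 - real K / (real P - real K)" using PK \<open>0 < real K\<close> by simp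
  have step: "real ((P - Suc j) choose K) = ?f * ?C"
    by (rule binomial_diff_Suc_eq[OF \<open>j < K\<close> assms(3)])
  have IH: "real (P choose K) * (1 - real K / (real P - real K)) ^ j \<le> ?C"
    "?C \<le> real (P choose K) * (1 - real K / real P) ^ j"
    using Suc \<open>j < K\<close> by auto
  have "real (P choose K) * (1 - real K / (real P - real K)) ^ Suc j
      = (1 - real K / (real P - real K)) * (real (P choose K) * (1 - real K / (real P - real K)) ^ j)"
    by simp
  also have "\<dots> \<le> ?f * ?C"
    using lo lo0 IH(1) by (intro mult_mono) auto
  finally have lower: "real (P choose K) * (1 - real K / (real P - real K)) ^ Suc j \<le> real ((P - Suc j) choose K)"
    unfolding step .
  have "real ((P - Suc j) choose K) \<le> (1 - real K / real P) * (real (P choose K) * (1 - real K / real P) ^ j)"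
    unfolding step using hi lo lo0 IH(2) by (intro mult_mono) auto
  then have upper: "real ((P - Suc j) choose K) \<le> real (P choose K) * (1 - real K / real P) ^ Suc j"
    by (simp add: mult.left_commute)
  show ?case using lower upper ..
qed

lemma q_le:
  assumes "1 \<le> K" "2 * K \<le> P"
  shows "q K P \<le> 1 / (1 + real K ^ 2 / real P)"
proof -
  let ?t = "real K / real P"
  have t: "0 \<le> ?t" "?t \<le> 1" using assms by auto
  have "q K P \<le> (1 - ?t) ^ K"
    using binomial_diff_bounds[OF le_refl assms] assms unfolding q_def by (simp add: divide_le_eq mult.commute)
  moreover have "(1 - ?t) ^ K * (1 + real K ^ 2 / real P) \<le> 1"
  proof -
    have "1 + real K ^ 2 / real P \<le> (1 + ?t) ^ K"
      using Bernoulli_inequality[of ?t K] t by (simp add: power2_eq_square)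
    then have "(1 - ?t) ^ K * (1 + real K ^ 2 / real P) \<le> (1 - ?t) ^ K * (1 + ?t) ^ K"
      using t by (intro mult_left_mono) auto
    also have "\<dots> = (1 - ?t ^ 2) ^ K"
      by (simp add: power_mult_distrib[symmetric] algebra_simps power2_eq_square)
    also have "\<dots> \<le> 1" using t by (intro power_le_one) (auto simp: power_le_one)
    finally show ?thesis .
  qed
  moreover have "1 + real K ^ 2 / real P > 0" by (simp add: add_pos_nonneg)
  ultimately have "q K P * (1 + real K ^ 2 / real P) \<le> 1"
    by (meson less_imp_le mult_right_mono order_trans)
  then show ?thesis using \<open>1 + real K ^ 2 / real P > 0\<close> by (simp add: le_divide_eq)
qed

lemma q_ge:
  assumes "1 \<le> K" "2 * K \<le> P"
  shows "1 - real K ^ 2 / (real P - real K) \<le> q K P"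
proof -
  let ?s = "real K / (real P - real K)"
  have s: "0 \<le> ?s" "?s \<le> 1" using assms by auto
  have "1 - real K ^ 2 / (real P - real K) = 1 + real K * (- ?s)"
    by (simp add: power2_eq_square)
  also have "\<dots> \<le> (1 - ?s) ^ K" using Bernoulli_inequality[of "- ?s" K] s by simp
  also have "\<dots> \<le> q K P"
    using binomial_diff_bounds[OF le_refl assms] assms unfolding q_def by (simp add: le_divide_eq mult.commute)
  finally show ?thesis .
qed

section \<open>Asymptotics along a scaling\<close>

lemma scaling_ratios_tendsto_0:
  fixes K P :: "nat \<Rightarrow> nat"
  assumes K: "\<And>n. 1 \<le> K n" and lim: "(\<lambda>n. real (K n) ^ 2 / real (P n)) \<longlonglongrightarrow> 0"
  shows "(\<lambda>n. real (K n) / real (P n)) \<longlonglongrightarrow> 0" and "(\<lambda>n. 1 / real (P n)) \<longlonglongrightarrow> 0"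
proof -
  have "real (K n) \<le> real (K n) ^ 2" "1 \<le> real (K n) ^ 2" for n
    using K[of n] by (simp add: power2_eq_square, simp add: one_le_power)
  then have le: "real (K n) / real (P n) \<le> real (K n) ^ 2 / real (P n)"
    "1 / real (P n) \<le> real (K n) ^ 2 / real (P n)" for n
    by (simp_all add: divide_right_mono)
  show "(\<lambda>n. real (K n) / real (P n)) \<longlonglongrightarrow> 0"
    by (rule tendsto_sandwich[OF _ _ tendsto_const lim]) (simp_all add: le)
  show "(\<lambda>n. 1 / real (P n)) \<longlonglongrightarrow> 0"
    by (rule tendsto_sandwich[OF _ _ tendsto_const lim]) (simp_all add: le)
qed

lemma eventually_pool_large:
  fixes K P :: "nat \<Rightarrow> nat"
  assumes scaling: "\<And>n. 1 \<le> K n \<and> K n \<le> P n"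
    and lim: "(\<lambda>n. real (K n) ^ 2 / real (P n)) \<longlonglongrightarrow> 0"
  shows "eventually (\<lambda>n. 3 \<le> P n \<and> 2 * K n \<le> P n) sequentially"
proof -
  have K: "\<And>n. 1 \<le> K n" using scaling by blast
  note ratios = scaling_ratios_tendsto_0[OF K lim]
  have "eventually (\<lambda>n. 1 / real (P n) < 1 / 3) sequentially"
    by (rule order_tendstoD(2)[OF ratios(2)]) simp
  moreover have "eventually (\<lambda>n. real (K n) / real (P n) < 1 / 2) sequentially"
    by (rule order_tendstoD(2)[OF ratios(1)]) simp
  ultimately show ?thesis
  proof eventually_elim
    case (elim n)
    have "0 < real (P n)" using scaling[of n] by simp
    then have "3 < real (P n)" "2 * real (K n) < real (P n)" using elim by (simp_all add: field_simps)
    then show ?case by linarith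
  qed
qed

lemma meet_prob_asymp:
  fixes K P :: "nat \<Rightarrow> nat"
  assumes scaling: "\<And>n. 1 \<le> K n \<and> K n \<le> P n"
    and lim: "(\<lambda>n. real (K n) ^ 2 / real (P n)) \<longlonglongrightarrow> 0"
  shows "(\<lambda>n. meet_prob (K n) (P n) / meet_main_term (K n) (P n)) \<longlonglongrightarrow> 1"
proof (rule tendsto_sandwich)
  have K: "\<And>n. 1 \<le> K n" using scaling by blast
  note ratios = scaling_ratios_tendsto_0[OF K lim]
  have M: "0 < meet_main_term (K n) (P n)" for n
    using scaling[of n] unfolding meet_main_term_def by (intro add_pos_pos) auto
  show "(\<lambda>n. 1 - (4 / real (P n) + 3 * (real (K n) ^ 2 / real (P n)) + 9 * (real (K n) / real (P n))))
      \<longlonglongrightarrow> 1"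
    using tendsto_diff[OF tendsto_const tendsto_add[OF tendsto_add[OF tendsto_mult[OF tendsto_const ratios(2)]
      tendsto_mult[OF tendsto_const lim]] tendsto_mult[OF tendsto_const ratios(1)]], of 1 4 3 9]
    by simp
  show "(\<lambda>n. 1 + 3 * (real (K n) ^ 2 / real (P n))) \<longlonglongrightarrow> 1"
    using tendsto_add[OF tendsto_const tendsto_mult[OF tendsto_const lim], of 1 3] by simp
  show "\<forall>\<^sub>F n in sequentially. meet_prob (K n) (P n) / meet_main_term (K n) (P n)
      \<le> 1 + 3 * (real (K n) ^ 2 / real (P n))"
  proof (intro always_eventually allI)
    fix n
    show "meet_prob (K n) (P n) / meet_main_term (K n) (P n) \<le> 1 + 3 * (real (K n) ^ 2 / real (P n))"
      using meet_prob_le_main_term[of "K n" "P n"] scaling[of n]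
      by (subst pos_divide_le_eq[OF M]) (simp add: mult.commute)
  qed
  show "\<forall>\<^sub>F n in sequentially. 1 - (4 / real (P n) + 3 * (real (K n) ^ 2 / real (P n))
      + 9 * (real (K n) / real (P n))) \<le> meet_prob (K n) (P n) / meet_main_term (K n) (P n)"
    using eventually_pool_large[OF scaling lim]
  proof eventually_elim
    case (elim n)
    then show ?case using main_term_le_meet_prob[of "K n" "P n"] scaling[of n]
      by (subst pos_le_divide_eq[OF M]) (simp add: mult.commute)
  qed
qed

lemma one_minus_q_asymp:
  fixes K P :: "nat \<Rightarrow> nat"
  assumes scaling: "\<And>n. 1 \<le> K n \<and> K n \<le> P n"
    and lim: "(\<lambda>n. real (K n) ^ 2 / real (P n)) \<longlonglongrightarrow> 0"
  shows "(\<lambda>n. (1 - q (K n) (P n)) / (real (K n) ^ 2 / real (P n))) \<longlonglongrightarrow> 1"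
proof (rule tendsto_sandwich)
  have K: "\<And>n. 1 \<le> K n" using scaling by blast
  let ?x = "\<lambda>n. real (K n) ^ 2 / real (P n)"
  show "(\<lambda>n. 1 / (1 + ?x n)) \<longlonglongrightarrow> 1"
    using tendsto_divide[OF tendsto_const tendsto_add[OF tendsto_const lim], of 1 1] by simp
  show "(\<lambda>n. 1 / (1 - real (K n) / real (P n))) \<longlonglongrightarrow> 1"
    using tendsto_divide[OF tendsto_const tendsto_diff[OF tendsto_const scaling_ratios_tendsto_0(1)[OF K lim]],
      of 1 1] by simp
  show "\<forall>\<^sub>F n in sequentially. 1 / (1 + ?x n) \<le> (1 - q (K n) (P n)) / ?x n"
    using eventually_pool_large[OF scaling lim]
  proof eventually_elim
    case (elim n)
    have gen: "1 / (1 + x) \<le> (1 - q) / x" if "0 < x" "q \<le> 1 / (1 + x)" for x q :: real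
      using that by (simp add: field_simps)
    have "0 < ?x n" using K[of n] elim by simp
    moreover have "q (K n) (P n) \<le> 1 / (1 + ?x n)" using q_le[of "K n" "P n"] K[of n] elim by blast
    ultimately show ?case by (rule gen)
  qed
  show "\<forall>\<^sub>F n in sequentially. (1 - q (K n) (P n)) / ?x n \<le> 1 / (1 - real (K n) / real (P n))"
    using eventually_pool_large[OF scaling lim]
  proof eventually_elim
    case (elim n)
    have div: "(1 - q) / x \<le> c" if "0 < x" "1 - q \<le> x * c" for x q c :: real
      using that by (simp add: divide_le_eq mult.commute)
    have eq: "k ^ 2 / (p - k) = k ^ 2 / p * (1 / (1 - k / p))" if "0 < k" "k < p" for k p :: real
      using that by (simp add: field_simps)
    have "real (K n) ^ 2 / (real (P n) - real (K n)) = ?x n * (1 / (1 - real (K n) / real (P n)))"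
      by (rule eq) (use K[of n] elim in simp_all)
    moreover have "1 - real (K n) ^ 2 / (real (P n) - real (K n)) \<le> q (K n) (P n)"
      using q_ge K elim by blast
    ultimately have "1 - q (K n) (P n) \<le> ?x n * (1 / (1 - real (K n) / real (P n)))"
      by linarith
    moreover have "0 < ?x n" using K[of n] elim by simp
    ultimately show ?case using div by blast
  qed
qed

lemma edge_prob_asymp:
  fixes K P :: "nat \<Rightarrow> nat" and p :: "nat \<Rightarrow> real"
  assumes scaling: "\<And>n. 1 \<le> K n \<and> K n \<le> P n"
    and lim: "(\<lambda>n. real (K n) ^ 2 / real (P n)) \<longlonglongrightarrow> 0"
    and p_equiv: "(\<lambda>n. p n / (1 - q (K n) (P n))) \<longlonglongrightarrow> 1"
  shows "(\<lambda>n. p n / (real (K n) ^ 2 / real (P n))) \<longlonglongrightarrow> 1"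
proof -
  have "(\<lambda>n. p n / (1 - q (K n) (P n)) * ((1 - q (K n) (P n)) / (real (K n) ^ 2 / real (P n)))) \<longlonglongrightarrow> 1"
    using tendsto_mult[OF p_equiv one_minus_q_asymp[OF scaling lim]] by simp
  moreover have "eventually (\<lambda>n. q (K n) (P n) < 1) sequentially"
    using eventually_pool_large[OF scaling lim]
  proof eventually_elim
    case (elim n)
    have less_1: "1 / (1 + y) < 1" if "0 < y" for y :: real
      using that by simp
    have "q (K n) (P n) \<le> 1 / (1 + real (K n) ^ 2 / real (P n))" using q_le scaling elim by blast
    moreover have "1 / (1 + real (K n) ^ 2 / real (P n)) < 1"
      by (rule less_1) (use scaling[of n] in simp)
    ultimately show ?case by linarith
  qed
  ultimately show ?thesis
    by (rule Lim_transform_eventually[OF _ eventually_mono]) simp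
qed

lemma ET_ratio_eq:
  assumes "3 \<le> n" "1 \<le> K" "K \<le> P" "0 < p" "p \<le> 1"
  shows "ET_rkg n K P / ET_er n p / (1 + real P / real K ^ 3)
           = meet_prob K P / meet_main_term K P * (real K ^ 2 / real P / p) ^ 3"
proof -
  have cancel: "t / b ^ 3 / c = t / (a ^ 3 * c) * (a / b) ^ 3" if "0 < a" "0 < b" "0 < c" for t a b c :: real
    using that by (simp add: field_simps power_divide)
  have "ET_rkg n K P / ET_er n p = meet_prob K P / p ^ 3"
    using assms by (simp add: ET_rkg_eq ET_er_eq)
  moreover have "meet_main_term K P = (real K ^ 2 / real P) ^ 3 * (1 + real P / real K ^ 3)"
    using assms by (intro meet_main_term_eq) auto
  ultimately show ?thesis
    using assms by (simp only:) (rule cancel; simp add: add_pos_nonneg)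
qed

theorem corollary1:
  fixes K P :: "nat \<Rightarrow> nat" and p :: "nat \<Rightarrow> real"
  assumes scaling: "\<And>n. 1 \<le> K n \<and> K n \<le> P n"
    and lim: "(\<lambda>n. real (K n)^2 / real (P n)) \<longlonglongrightarrow> 0"
    and p_range: "\<And>n. 0 \<le> p n \<and> p n \<le> 1"
    and p_equiv: "(\<lambda>n. p n / (1 - q (K n) (P n))) \<longlonglongrightarrow> 1"
  shows "(\<lambda>n. (ET_rkg n (K n) (P n) / ET_er n (p n))
                / (1 + real (P n) / real (K n)^3)) \<longlonglongrightarrow> 1"
proof -
  define x where "x n = real (K n) ^ 2 / real (P n)" for n
  have x: "0 < x n" for n using scaling[of n] by (simp add: x_def)
  have p_x: "(\<lambda>n. p n / x n) \<longlonglongrightarrow> 1"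
    using edge_prob_asymp[OF scaling lim p_equiv] by (simp add: x_def)
  have "(\<lambda>n. meet_prob (K n) (P n) / meet_main_term (K n) (P n) * (x n / p n) ^ 3) \<longlonglongrightarrow> 1"
    using tendsto_mult[OF meet_prob_asymp[OF scaling lim] tendsto_power[OF tendsto_inverse[OF p_x], of 3]]
    by simp
  moreover have "eventually (\<lambda>n. 0 < p n \<and> 3 \<le> n) sequentially"
    using order_tendstoD(1)[OF p_x zero_less_one] eventually_ge_at_top[of 3]
  proof eventually_elim
    case (elim n)
    then show ?case using x[of n] by (auto simp: zero_less_divide_iff)
  qed
  ultimately show ?thesis
  proof (rule Lim_transform_eventually[OF _ eventually_mono])
    fix n assume "0 < p n \<and> 3 \<le> n"
    then show "meet_prob (K n) (P n) / meet_main_term (K n) (P n) * (x n / p n) ^ 3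
        = ET_rkg n (K n) (P n) / ET_er n (p n) / (1 + real (P n) / real (K n) ^ 3)"
      unfolding x_def using scaling[of n] p_range[of n] by (intro ET_ratio_eq[symmetric]) auto
  qed
qed

end
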